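(* Let $m\ge 2$ be an integer, let $B\subseteq m\mathbb Z$ be a finite nonempty set, and let $F\subseteq\mathbb Z$ be a finite nonempty set all of whose elements are congruent to $\tilde f$ modulo $m$, where $\tilde f\in\{1,\dots,m-1\}$. If \[m\ge \tilde f+2\tilde f\left\lfloor\frac{|B|+1}{\tilde f}\right\rfloor+\operatorname{mod}_{\tilde f}(|B|+1),\] then $C=m\mathbb N\cup B\cup F$ arises as a minimal additive complement in $\mathbb Z$.
   Context: $\mathbb N=\{0,1,2,\dots\}$, $m\mathbb N=\{mk:k\in\mathbb N\}$; $\operatorname{mod}_{a}n$ denotes the remainder of $n$ upon division by $a$. For $C,W\subseteq\mathbb Z$, $C+W=\{c+w:c\in C,w\in W\}$. $C$ is a minimal additive complement (MAC) to $W$ if $C+W=\mathbb Z$ and no proper subset $C'\subsetneq C$ satisfies $C'+W=\mathbb Z$. $C$ arises as a MAC if there exists $W\subseteq\mathbb Z$ to which $C$ is a MAC. *)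

theory Defs
  imports Main
begin

definition sumset :: "int set \<Rightarrow> int set \<Rightarrow> int set" where
  "sumset C W = {c + w | c w. c \<in> C \<and> w \<in> W}"

definition is_MAC :: "int set \<Rightarrow> int set \<Rightarrow> bool" where
  "is_MAC C W \<longleftrightarrow> sumset C W = UNIV \<and> (\<forall>C'. C' \<subset> C \<longrightarrow> sumset C' W \<noteq> UNIV)"

definition arises_as_MAC :: "int set \<Rightarrow> bool" where
  "arises_as_MAC C \<longleftrightarrow> (\<exists>W. is_MAC C W)"

end

(*
  Every c in C gets a witness, an integer that c + W reaches but c' + W does not for any
  other c' in C: c itself for c in mN, c + q c for c in B, and for c in F a very negative
  multiple far c of m, these multiples being spaced further apart than the diameter of F.
  The residues q b are distinct, lie in (0, m - f), and together with 0 contain no two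
  elements differing by f; the hypothesis on m is what allows taking them from the blocks
  [2kf, 2kf + f). W is then defined one residue class at a time: in a class r of
  Q = {0} u q(B) it contains only r; in the class r - f it contains everything except the
  finitely many integers through which an element of F would hit a witness (for r = 0 also
  every integer >= - max F); in all other classes it contains everything. Witnesses are
  private by construction, and every integer is covered because a nonempty finite set is not
  invariant under a nonzero translation and cannot contain a progression tending to - infinity.
*)

theory Submission
  imports Defs
begin

lemma is_MAC_if_private_witnesses:
  assumes cover: "sumset C W = UNIV"
    and unique: "\<And>c c' w. c \<in> C \<Longrightarrow> c' \<in> C \<Longrightarrow> w \<in> W \<Longrightarrow> c' + w = p c \<Longrightarrow> c' = c"
  shows "is_MAC C W"
  unfolding is_MAC_def
proof (intro conjI allI impI cover)
  fix C' assume "C' \<subset> C"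
  then obtain c where c: "c \<in> C" "c \<notin> C'" by blast
  show "sumset C' W \<noteq> UNIV"
  proof
    assume "sumset C' W = UNIV"
    then have "p c \<in> sumset C' W" by simp
    then obtain c' w where c': "c' \<in> C'" "w \<in> W" "p c = c' + w"
      unfolding sumset_def by blast
    with \<open>C' \<subset> C\<close> have "c' \<in> C" by blast
    with c' have "c' = c" using unique[OF c(1)] by simp
    with c' c(2) show False by simp
  qed
qed

lemma finite_translation_closed_imp_zero:
  fixes A :: "'a::linordered_ab_group_add set"
  assumes "finite A" "A \<noteq> {}" and closed: "\<And>a. a \<in> A \<Longrightarrow> a + t \<in> A"
  shows "t = 0"
proof -
  have "Max A + t \<in> A" "Min A + t \<in> A" using assms by simp_all
  then have "Max A + t \<le> Max A" "Min A \<le> Min A + t" using assms(1) by (meson Max_ge Min_le)+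
  then show ?thesis by simp
qed

lemma progression_escapes_finite:
  fixes m y L :: int
  assumes "finite X" "0 < m"
  obtains j where "0 \<le> j" "y - m * j \<notin> X" "y - m * j < L"
proof
  define M where "M = Min (insert L X)"
  define j where "j = \<bar>y\<bar> + \<bar>M\<bar> + 1"
  show "0 \<le> j" by (simp add: j_def)
  have "j \<le> m * j" using assms(2) by (simp add: j_def)
  then have "y - m * j < M" unfolding j_def by linarith
  moreover have "M \<le> x" if "x \<in> insert L X" for x
    using assms(1) that by (simp add: M_def)
  ultimately show "y - m * j \<notin> X" "y - m * j < L" by force+
qed

(* The i-th nonnegative integer whose quotient by f is even. *)
definition even_block :: "int \<Rightarrow> int \<Rightarrow> int" where
  "even_block f i = 2 * f * (i div f) + i mod f"

lemma even_block_alt_def: "even_block f i = i + f * (i div f)"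
proof -
  have "i = f * (i div f) + i mod f" by simp
  then show ?thesis unfolding even_block_def by (simp add: algebra_simps)
qed

lemma even_block_strict_mono:
  assumes "0 < f" shows "strict_mono (even_block f)"
proof
  fix i j :: int assume "i < j"
  moreover have "f * (i div f) \<le> f * (j div f)"
    using assms \<open>i < j\<close> by (simp add: zdiv_mono1)
  ultimately show "even_block f i < even_block f j" by (simp add: even_block_alt_def)
qed

lemma even_block_div:
  assumes "0 < f" shows "even_block f i div f = 2 * (i div f)"
proof -
  have "even_block f i = f * (2 * (i div f)) + i mod f" by (simp add: even_block_def)
  then show ?thesis using assms by simp
qed

lemma even_block_neq_plus:
  assumes "0 < f" shows "even_block f i \<noteq> even_block f j + f"
proof
  assume eq: "even_block f i = even_block f j + f"
  have "2 * (i div f) = even_block f i div f" using even_block_div[OF assms] by simp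
  also have "\<dots> = even_block f j div f + 1" using eq assms by (simp add: div_add_self2)
  also have "\<dots> = 2 * (j div f) + 1" using even_block_div[OF assms] by simp
  finally have "2 * (i div f) = 2 * (j div f) + 1" .
  then show False by (metis even_add even_mult_iff even_numeral odd_one)
qed

lemma residues_without_difference:
  fixes f m :: int and n :: nat
  assumes "0 < f" and "f + even_block f (int n + 1) \<le> m"
  obtains R where "card R = n" "R \<subseteq> {0<..<m - f}"
    and "\<And>r s. r \<in> insert 0 R \<Longrightarrow> s \<in> insert 0 R \<Longrightarrow> r \<noteq> s + f"
proof
  define R where "R = even_block f ` {1..int n}"
  have mono: "strict_mono (even_block f)" using even_block_strict_mono[OF assms(1)] .
  have "card R = card {1..int n}"
    unfolding R_def using strict_mono_imp_inj_on[OF mono] by (rule card_image)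
  then show "card R = n" by simp
  have zero: "even_block f 0 = 0" by (simp add: even_block_def)
  show "R \<subseteq> {0<..<m - f}"
  proof
    fix r assume "r \<in> R"
    then obtain i where "i \<in> {1..int n}" and r: "r = even_block f i"
      unfolding R_def by blast
    then have i: "0 < i" "i < int n + 1" by simp_all
    have "even_block f 0 < r" "r < even_block f (int n + 1)"
      unfolding r using strict_monoD[OF mono] i by blast+
    then show "r \<in> {0<..<m - f}" using zero assms(2) by simp
  qed
  have range: "insert 0 R \<subseteq> range (even_block f)"
    unfolding R_def using zero rangeI[of "even_block f" 0] by auto
  show "r \<noteq> s + f" if "r \<in> insert 0 R" "s \<in> insert 0 R" for r s
  proof -
    have "r \<in> range (even_block f)" "s \<in> range (even_block f)"
      using subsetD[OF range] that by simp_all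
    then show ?thesis using even_block_neq_plus[OF assms(1)] by auto
  qed
qed

locale mac_construction =
  fixes m f :: int and B F :: "int set" and q :: "int \<Rightarrow> int"
  assumes f_pos: "0 < f" and f_less: "f < m"
    and finite_B: "finite B" and B_dvd: "\<And>b. b \<in> B \<Longrightarrow> m dvd b"
    and finite_F: "finite F" and F_nonempty: "F \<noteq> {}"
    and F_mod: "\<And>x. x \<in> F \<Longrightarrow> x mod m = f"
    and inj_q: "inj_on q B"
    and q_pos: "\<And>b. b \<in> B \<Longrightarrow> 0 < q b" and q_less: "\<And>b. b \<in> B \<Longrightarrow> q b + f < m"
    and q_no_difference: "\<And>r s. r \<in> insert 0 (q ` B) \<Longrightarrow> s \<in> insert 0 (q ` B) \<Longrightarrow> r \<noteq> s + f"
begin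

definition C :: "int set" where
  "C = {m * int k | k. True} \<union> B \<union> F"

definition Q :: "int set" where
  "Q = insert 0 (q ` B)"

lemma m_pos: "0 < m"
  using f_pos f_less by simp

lemma Q_bounds: "r \<in> Q \<Longrightarrow> 0 \<le> r \<and> r + f < m"
  using q_pos q_less f_less unfolding Q_def by force

lemma Q_mod: assumes "r \<in> Q" shows "r mod m = r"
  using Q_bounds[OF assms] f_pos by (intro mod_pos_pos_trivial) auto

lemma shift_Q_notin_Q:
  assumes "r \<in> Q" "s \<in> Q" shows "(r - f) mod m \<noteq> s"
proof (cases "f \<le> r")
  case True
  then have "(r - f) mod m = r - f"
    using Q_bounds[OF assms(1)] f_pos by (intro mod_pos_pos_trivial) auto
  then show ?thesis using q_no_difference[of r s] assms unfolding Q_def by auto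
next
  case False
  have "(r - f) mod m = (r - f + m) mod m" by simp
  also have "\<dots> = r - f + m"
    using False Q_bounds[OF assms(1)] by (intro mod_pos_pos_trivial) auto
  finally show ?thesis using Q_bounds[OF assms(2)] Q_bounds[OF assms(1)] by simp
qed

lemma shift_Q_inj:
  assumes "r \<in> Q" "s \<in> Q" "(r - f) mod m = (s - f) mod m" shows "r = s"
proof -
  have "r mod m = ((r - f) mod m + f) mod m" by (simp add: mod_add_left_eq)
  also have "\<dots> = s mod m" using assms(3) by (simp add: mod_add_left_eq)
  finally show ?thesis using Q_mod assms(1,2) by simp
qed

lemma C_mod:
  assumes "c \<in> C" shows "c mod m = (if c \<in> F then f else 0)"
proof (cases "c \<in> F")
  case False
  with assms have "m dvd c" using B_dvd unfolding C_def by auto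
  with False show ?thesis by simp
qed (simp add: F_mod)

definition diam :: int where
  "diam = Max F - Min F"

definition far :: "int \<Rightarrow> int" where
  "far x = m * ((2 * diam + 1) * (x - Max F - 1) + Min (insert 0 B))"

definition witness :: "int \<Rightarrow> int" where
  "witness c = (if c \<in> B then c + q c else if c \<in> F then far c else c)"

definition F_clashes :: "int set" where
  "F_clashes = {far x - c | x c. x \<in> F \<and> c \<in> F \<and> c \<noteq> x}"

definition B_clashes :: "int \<Rightarrow> int set" where
  "B_clashes b = (\<lambda>x. b + q b - x) ` F"

definition W :: "int set" where
  "W = {w. (w mod m \<in> Q \<longrightarrow> w = w mod m)
         \<and> (w mod m = (- f) mod m \<longrightarrow> w < - Max F \<and> w \<notin> F_clashes)
         \<and> (\<forall>b\<in>B. w mod m = (q b - f) mod m \<longrightarrow> w \<notin> B_clashes b)}"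

lemma F_bounds: "x \<in> F \<Longrightarrow> Min F \<le> x" "x \<in> F \<Longrightarrow> x \<le> Max F"
  using finite_F by simp_all

lemma diam_nonneg: "0 \<le> diam"
  using F_bounds Max_in[OF finite_F F_nonempty] unfolding diam_def by fastforce

lemma far_dvd: "m dvd far x"
  unfolding far_def by simp

lemma far_le:
  assumes "x \<in> F" shows "far x \<le> Min (insert 0 B) - (2 * diam + 1)"
proof -
  define a where "a = (2 * diam + 1) * (x - Max F - 1) + Min (insert 0 B)"
  have "(2 * diam + 1) * (x - Max F - 1) \<le> (2 * diam + 1) * (- 1)"
    using F_bounds[OF assms] diam_nonneg by (intro mult_left_mono) auto
  moreover have "Min (insert 0 B) \<le> 0" using finite_B by simp
  ultimately have a: "a \<le> Min (insert 0 B) - (2 * diam + 1)" "a < 0"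
    unfolding a_def using diam_nonneg by simp_all
  have "m * a \<le> 1 * a" using a(2) m_pos by (intro mult_right_mono_neg) auto
  with a(1) show ?thesis unfolding far_def a_def[symmetric] by simp
qed

lemma far_notin_mults_B:
  assumes "x \<in> F" shows "far x \<notin> {m * int k | k. True} \<union> B"
proof -
  have "Min (insert 0 B) \<le> c" if "c \<in> insert 0 B" for c
    using finite_B that by simp
  then have "far x < 0" "\<forall>b\<in>B. far x < b"
    using far_le[OF assms] diam_nonneg by fastforce+
  moreover have "\<not> m * int k < 0" for k using m_pos by (simp add: not_less)
  ultimately show ?thesis by auto
qed

lemma far_separated:
  assumes "x \<noteq> x'" shows "2 * diam < \<bar>far x - far x'\<bar>"
proof -
  have "far x - far x' = m * ((2 * diam + 1) * (x - x'))"
    unfolding far_def by (simp add: algebra_simps)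
  then have "\<bar>far x - far x'\<bar> = m * ((2 * diam + 1) * \<bar>x - x'\<bar>)"
    using m_pos diam_nonneg by (simp add: abs_mult)
  also have "\<dots> \<ge> 1 * ((2 * diam + 1) * 1)"
    using assms m_pos diam_nonneg by (intro mult_mono) auto
  finally show ?thesis by simp
qed

lemma zero_in_Q: "0 \<in> Q" and q_in_Q: "b \<in> B \<Longrightarrow> q b \<in> Q"
  unfolding Q_def by simp_all

lemma Q_subset_W:
  assumes "r \<in> Q" shows "r \<in> W"
proof -
  have "r \<noteq> (- f) mod m" using shift_Q_notin_Q[OF zero_in_Q assms] by simp
  moreover have "r \<noteq> (q b - f) mod m" if "b \<in> B" for b
    using shift_Q_notin_Q[OF q_in_Q[OF that] assms] by simp
  ultimately show ?thesis using Q_mod[OF assms] assms unfolding W_def by simp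
qed

lemma W_minus_f_classI:
  assumes "w mod m = (- f) mod m" "w < - Max F" "w \<notin> F_clashes" shows "w \<in> W"
proof -
  have "w mod m \<notin> Q" using assms(1) shift_Q_notin_Q[OF zero_in_Q] by auto
  moreover have "w mod m \<noteq> (q b - f) mod m" if "b \<in> B" for b
    using assms(1) shift_Q_inj[OF q_in_Q[OF that] zero_in_Q] q_pos[OF that] by auto
  ultimately show ?thesis using assms unfolding W_def by simp
qed

lemma W_q_minus_f_classI:
  assumes "b \<in> B" "w mod m = (q b - f) mod m" "w \<notin> B_clashes b" shows "w \<in> W"
proof -
  have "w mod m \<notin> Q" using assms(2) shift_Q_notin_Q[OF q_in_Q[OF assms(1)]] by auto
  moreover have "w mod m \<noteq> (- f) mod m"
    using assms(2) shift_Q_inj[OF q_in_Q[OF assms(1)] zero_in_Q] q_pos[OF assms(1)] by fastforce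
  moreover have "b' = b" if "b' \<in> B" "w mod m = (q b' - f) mod m" for b'
  proof -
    have "q b' = q b" using shift_Q_inj[OF q_in_Q[OF that(1)] q_in_Q[OF assms(1)]] that(2) assms(2)
      by simp
    then show ?thesis using inj_q that(1) assms(1) by (simp add: inj_on_eq_iff)
  qed
  then have "\<forall>b'\<in>B. w mod m = (q b' - f) mod m \<longrightarrow> w \<notin> B_clashes b'" using assms(3) by blast
  ultimately show ?thesis unfolding W_def by simp
qed

lemma W_other_classI:
  assumes "w mod m \<notin> Q" "\<And>r. r \<in> Q \<Longrightarrow> w mod m \<noteq> (r - f) mod m" shows "w \<in> W"
proof -
  have "w mod m \<noteq> (- f) mod m" using assms(2)[OF zero_in_Q] by simp
  moreover have "w mod m \<noteq> (q b - f) mod m" if "b \<in> B" for b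
    using assms(2)[OF q_in_Q[OF that]] .
  ultimately show ?thesis using assms(1) unfolding W_def by simp
qed

lemma W_Q_classD: "w \<in> W \<Longrightarrow> w mod m \<in> Q \<Longrightarrow> w = w mod m"
  unfolding W_def by simp

lemma W_minus_f_classD: "w \<in> W \<Longrightarrow> w mod m = (- f) mod m \<Longrightarrow> w < - Max F \<and> w \<notin> F_clashes"
  unfolding W_def by simp

lemma W_q_minus_f_classD:
  "w \<in> W \<Longrightarrow> b \<in> B \<Longrightarrow> w mod m = (q b - f) mod m \<Longrightarrow> w \<notin> B_clashes b"
  unfolding W_def by simp

lemma witness_mod:
  assumes "c \<in> C" shows "witness c mod m = (if c \<in> B then q c else 0)"
proof (cases "c \<in> B")
  case True
  then have "(c + q c) mod m = q c mod m"
    using B_dvd by (metis add.left_neutral dvd_imp_mod_0 mod_add_left_eq)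
  with True show ?thesis using Q_mod[OF q_in_Q[OF True]] unfolding witness_def by simp
next
  case False
  then have "m dvd witness c"
    using assms far_dvd unfolding witness_def C_def by auto
  with False show ?thesis by simp
qed

lemma witness_minus_mod:
  assumes "c \<in> C" "c' \<in> C"
  shows "(witness c - c') mod m = ((if c \<in> B then q c else 0) - (if c' \<in> F then f else 0)) mod m"
proof -
  have "(witness c - c') mod m = (witness c mod m - c' mod m) mod m" by (simp add: mod_diff_eq)
  then show ?thesis using witness_mod[OF assms(1)] C_mod[OF assms(2)] by simp
qed

lemma witness_unique_outside_F:
  assumes "c \<in> C" "c' \<in> C" "c' \<notin> F" "w \<in> W" "c' + w = witness c"
  shows "c' = c"
proof -
  define r where "r = (if c \<in> B then q c else 0)"
  have w: "w = witness c - c'" using assms(5) by simp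
  have "r \<in> Q" unfolding r_def using zero_in_Q q_in_Q by simp
  moreover have "w mod m = r mod m"
    using w witness_minus_mod[OF assms(1,2)] assms(3) unfolding r_def by simp
  ultimately have "w = r" using W_Q_classD[OF assms(4)] Q_mod by simp
  with w have "c' = witness c - r" by simp
  show ?thesis
  proof (cases "c \<in> B")
    case True
    then show ?thesis using \<open>c' = witness c - r\<close> unfolding r_def witness_def by simp
  next
    case False
    have "c \<notin> F"
    proof
      assume "c \<in> F"
      then have "c' = far c" using False \<open>c' = witness c - r\<close> unfolding r_def witness_def by simp
      moreover have "c' \<in> {m * int k | k. True} \<union> B" using assms(2,3) unfolding C_def by blast
      ultimately show False using far_notin_mults_B[OF \<open>c \<in> F\<close>] by simp
    qed
    with False show ?thesis using \<open>c' = witness c - r\<close> unfolding r_def witness_def by simp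
  qed
qed

lemma witness_unique_from_F:
  assumes "c \<in> C" "c' \<in> F" "w \<in> W" "c' + w = witness c"
  shows "c' = c"
proof -
  have c': "c' \<in> C" using assms(2) unfolding C_def by simp
  have w: "w = witness c - c'" using assms(4) by simp
  consider (B) "c \<in> B" | (F) "c \<notin> B" "c \<in> F" | (mult) "c \<notin> B" "c \<notin> F" "c \<in> {m * int k | k. True}"
    using assms(1) unfolding C_def by blast
  then show ?thesis
  proof cases
    case B
    then have "w mod m = (q c - f) mod m" using witness_minus_mod[OF assms(1) c'] assms(2) w by simp
    then have "w \<notin> B_clashes c" using W_q_minus_f_classD[OF assms(3) B] by simp
    moreover have "w \<in> B_clashes c" using B assms(2) w unfolding B_clashes_def witness_def by simp
    ultimately show ?thesis by blast
  next
    case F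
    then have "w mod m = (- f) mod m" using witness_minus_mod[OF assms(1) c'] assms(2) w by simp
    then have "w \<notin> F_clashes" using W_minus_f_classD[OF assms(3)] by simp
    moreover have "w = far c - c'" using F w unfolding witness_def by simp
    ultimately show ?thesis using F(2) assms(2) unfolding F_clashes_def by auto
  next
    case mult
    then have "w mod m = (- f) mod m" using witness_minus_mod[OF assms(1) c'] assms(2) w by simp
    then have "w < - Max F" using W_minus_f_classD[OF assms(3)] by simp
    moreover have "c = c' + w" using assms(4) mult unfolding witness_def by simp
    moreover have "0 \<le> c" using mult m_pos by auto
    ultimately show ?thesis using F_bounds[OF assms(2)] by linarith
  qed
qed

lemma witness_unique:
  assumes "c \<in> C" "c' \<in> C" "w \<in> W" "c' + w = witness c"
  shows "c' = c"
proof (cases "c' \<in> F")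
  case True
  then show ?thesis by (rule witness_unique_from_F[OF assms(1) _ assms(3,4)])
next
  case False
  then show ?thesis by (rule witness_unique_outside_F[OF assms(1,2) _ assms(3,4)])
qed

lemma finite_F_clashes: "finite F_clashes"
proof -
  have "F_clashes \<subseteq> (\<lambda>(x, c). far x - c) ` (F \<times> F)" unfolding F_clashes_def by auto
  then show ?thesis using finite_F finite_subset by blast
qed

lemma finite_B_clashes: "finite (B_clashes b)"
  unfolding B_clashes_def using finite_F by simp

lemma escape_B_clashes:
  assumes "y \<noteq> b + q b" shows "\<exists>x\<in>F. y - x \<notin> B_clashes b"
proof (rule ccontr)
  assume none: "\<not> (\<exists>x\<in>F. y - x \<notin> B_clashes b)"
  have "x + (b + q b - y) \<in> F" if "x \<in> F" for x
  proof -
    have "y - x \<in> B_clashes b" using none that by blast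
    then obtain x' where "x' \<in> F" "y - x = b + q b - x'" unfolding B_clashes_def by blast
    moreover from this have "x + (b + q b - y) = x'" by simp
    ultimately show ?thesis by simp
  qed
  then have "b + q b - y = 0"
    using finite_translation_closed_imp_zero[OF finite_F F_nonempty] by blast
  with assms show False by simp
qed

lemma escape_F_clashes:
  assumes "y < 0" shows "\<exists>x\<in>F. y - x < - Max F \<and> y - x \<notin> F_clashes"
proof (cases "y - Max F \<in> F_clashes")
  case False
  moreover have "y - Max F < - Max F" using assms by simp
  ultimately show ?thesis using Max_in[OF finite_F F_nonempty] by blast
next
  case True
  then obtain x0 c0 where x0: "x0 \<in> F" "c0 \<in> F" "c0 \<noteq> x0" "y - Max F = far x0 - c0"
    unfolding F_clashes_def by blast
  have "Min (insert 0 B) \<le> 0" using finite_B by simp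
  then have below: "y - x < - Max F" if "x \<in> F" for x
    using far_le[OF x0(1)] F_bounds[OF x0(2)] F_bounds[OF that] x0(4) unfolding diam_def by simp
  show ?thesis
  proof (rule ccontr)
    assume none: "\<not> ?thesis"
    define t where "t = far x0 - y"
    have shift: "x + t \<in> F - {x0}" if x: "x \<in> F" for x
    proof -
      have "y - x \<in> F_clashes" using none below x by blast
      then obtain x' c' where x': "x' \<in> F" "c' \<in> F" "c' \<noteq> x'" "y - x = far x' - c'"
        unfolding F_clashes_def by blast
      have "\<bar>far x' - far x0\<bar> \<le> 2 * diam"
        using x'(4) x0(4) F_bounds[OF x'(2)] F_bounds[OF x0(2)] F_bounds[OF x]
        unfolding diam_def by (simp add: abs_le_iff)
      then have "x' = x0" using far_separated by fastforce
      moreover from this have "x + t = c'" using x'(4) unfolding t_def by simp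
      ultimately show ?thesis using x'(2,3) by simp
    qed
    then have "t = 0"
      using finite_translation_closed_imp_zero[OF finite_F F_nonempty] by blast
    then show False using shift[OF x0(1)] by simp
  qed
qed

lemma mults_in_C:
  assumes "0 \<le> j" shows "m * j \<in> C"
proof -
  have "m * j = m * int (nat j)" using assms by simp
  then show ?thesis unfolding C_def by blast
qed

lemma minus_F_mod: "x \<in> F \<Longrightarrow> (y - x) mod m = (y mod m - f) mod m"
  using F_mod mod_diff_eq[of y m x] by simp

lemma cover_zero_class:
  assumes "y mod m = 0" shows "\<exists>c\<in>C. \<exists>w\<in>W. y = c + w"
proof (cases "0 \<le> y")
  case True
  then have "y div m * m \<in> C"
    using mults_in_C[of "y div m"] m_pos by (simp add: mult.commute pos_imp_zdiv_nonneg_iff)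
  moreover have "y = y div m * m + 0" using div_mult_mod_eq[of y m] assms by simp
  ultimately show ?thesis using Q_subset_W[OF zero_in_Q] by blast
next
  case False
  then obtain x where x: "x \<in> F" "y - x < - Max F" "y - x \<notin> F_clashes"
    using escape_F_clashes[of y] by auto
  have "(y - x) mod m = (- f) mod m" using minus_F_mod[OF x(1)] assms by simp
  then have "y - x \<in> W" using W_minus_f_classI x(2,3) by blast
  moreover have "x \<in> C" using x(1) unfolding C_def by simp
  moreover have "y = x + (y - x)" by simp
  ultimately show ?thesis by blast
qed

lemma cover_q_class:
  assumes "b \<in> B" "y mod m = q b" shows "\<exists>c\<in>C. \<exists>w\<in>W. y = c + w"
proof (cases "y = b + q b")
  case True
  moreover have "b \<in> C" using assms(1) unfolding C_def by simp
  ultimately show ?thesis using Q_subset_W[OF q_in_Q[OF assms(1)]] by blast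
next
  case False
  then obtain x where x: "x \<in> F" "y - x \<notin> B_clashes b" using escape_B_clashes by blast
  have "(y - x) mod m = (q b - f) mod m" using minus_F_mod[OF x(1)] assms(2) by simp
  then have "y - x \<in> W" using W_q_minus_f_classI assms(1) x(2) by blast
  moreover have "x \<in> C" using x(1) unfolding C_def by simp
  moreover have "y = x + (y - x)" by simp
  ultimately show ?thesis by blast
qed

lemma cover_shifted_class:
  assumes "r \<in> Q" "y mod m = (r - f) mod m" shows "\<exists>c\<in>C. \<exists>w\<in>W. y = c + w"
proof -
  have shift: "(y - m * j) mod m = y mod m" for j by (simp add: mod_diff_eq[symmetric])
  have "\<exists>j\<ge>0. y - m * j \<in> W"
  proof (cases "r = 0")
    case True
    obtain j where "0 \<le> j" "y - m * j \<notin> F_clashes" "y - m * j < - Max F"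
      by (rule progression_escapes_finite[OF finite_F_clashes m_pos])
    moreover have "(y - m * j) mod m = (- f) mod m" using assms(2) True shift by simp
    ultimately show ?thesis using W_minus_f_classI by blast
  next
    case False
    then obtain b where b: "b \<in> B" "r = q b" using assms(1) unfolding Q_def by blast
    obtain j where "0 \<le> j" "y - m * j \<notin> B_clashes b"
      using progression_escapes_finite[OF finite_B_clashes m_pos] by blast
    moreover have "(y - m * j) mod m = (q b - f) mod m" using assms(2) b(2) shift by simp
    ultimately show ?thesis using W_q_minus_f_classI[OF b(1)] by blast
  qed
  then obtain j where "0 \<le> j" "y - m * j \<in> W" by blast
  moreover have "y = m * j + (y - m * j)" by simp
  ultimately show ?thesis using mults_in_C by blast
qed

lemma sumset_C_W: "sumset C W = UNIV"
proof -
  have "\<exists>c\<in>C. \<exists>w\<in>W. y = c + w" for y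
  proof (cases "y mod m \<in> Q")
    case True
    then consider "y mod m = 0" | b where "b \<in> B" "y mod m = q b" unfolding Q_def by blast
    then show ?thesis using cover_zero_class cover_q_class by cases
  next
    case not_Q: False
    show ?thesis
    proof (cases "\<exists>r\<in>Q. y mod m = (r - f) mod m")
      case True
      then show ?thesis using cover_shifted_class by blast
    next
      case False
      then have "y \<in> W" using W_other_classI not_Q by blast
      moreover have "0 \<in> C" using mults_in_C[of 0] by simp
      moreover have "y = 0 + y" by simp
      ultimately show ?thesis by blast
    qed
  qed
  then show ?thesis unfolding sumset_def by blast
qed

lemma is_MAC_C_W: "is_MAC C W"
  by (rule is_MAC_if_private_witnesses[OF sumset_C_W witness_unique])

end

theorem proposition5:
  fixes m f :: int and B F :: "int set"
  assumes "m \<ge> 2"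
    and "finite B" and "B \<noteq> {}" and "\<forall>b\<in>B. m dvd b"
    and "finite F" and "F \<noteq> {}" and "\<forall>x\<in>F. x mod m = f"
    and "1 \<le> f" and "f \<le> m - 1"
    and "m \<ge> f + 2 * f * ((int (card B) + 1) div f) + (int (card B) + 1) mod f"
  shows "arises_as_MAC ({m * int k | k. True} \<union> B \<union> F)"
proof -
  have f_pos: "0 < f" using assms(8) by simp
  moreover have "f + even_block f (int (card B) + 1) \<le> m"
    using assms(10) unfolding even_block_def by simp
  ultimately obtain R where R: "card R = card B" "R \<subseteq> {0<..<m - f}"
    and R_no_difference: "\<And>r s. r \<in> insert 0 R \<Longrightarrow> s \<in> insert 0 R \<Longrightarrow> r \<noteq> s + f"
    by (rule residues_without_difference) blast
  have "finite R" using R(2) finite_subset by blast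
  then obtain q where q: "bij_betw q B R"
    using finite_same_card_bij[OF assms(2)] R(1) by metis
  then have "q ` B = R" "inj_on q B" by (simp_all add: bij_betw_def)
  then interpret mac_construction m f B F q
    using assms f_pos R R_no_difference by unfold_locales auto
  show ?thesis using is_MAC_C_W unfolding arises_as_MAC_def C_def by blast
qed

end
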